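(* In the setting described in the context, assume A1$'$, A2 and A3. Suppose there exist a fixed subset $\mathcal K^*\subseteq\{1,\dots,K\}$ and a constant $\delta>0$ such that $\inf_{\mathbf w\in\mathcal W^*}\sum_{k\in\mathcal K^*}w_k\ge\frac12+\delta$ and $$\limsup_{n\to\infty}\Pr\Big(\bigcup_{k\in\mathcal K^*}\{Y\notin\mathcal C_k(\mathbf X;\mathcal D_n)\}\Big)\le\alpha.$$ Then $\liminf_{n\to\infty}\Pr\big(Y\in\mathcal C_{\mathrm{comb}}(\mathbf X;\mathcal D_n)\big)\ge1-\alpha$.
   Context: Setting: fix $K\ge2$ and $\alpha\in(0,1)$. For each sample size $n$, on a common probability space there are a random data set $\mathcal D_n$ and a random test pair $(\mathbf X,Y)$ with $\mathbf X\in\mathcal X\subseteq\mathbb R^p$, $Y\in\mathbb R$. For each $k\in\{1,\dots,K\}$ there is a random prediction set $\mathcal C_k(\mathbf X;\mathcal D_n)\subseteq\mathbb R$, determined by $\mathcal D_n$ and $\mathbf X$, such that the events $\{Y\in\mathcal C_k(\mathbf X;\mathcal D_n)\}$ are measurable. Let $\Delta^{K-1}=\{\mathbf w\in[0,1]^K:w_k\ge0,\sum_k w_k=1\}$ and let $\widehat{\mathbf w}_n=(\widehat w_{n,1},\dots,\widehat w_{n,K})$ be a $\sigma(\mathcal D_n)$-measurable random vector in $\Delta^{K-1}$. Let $\mathcal W^*\subseteq\Delta^{K-1}$ be a nonempty closed convex set; $\|\cdot\|$ is the Euclidean norm. A1$'$: $\sup_{k\in\{1,\dots,K\}}\big|\Pr(Y\notin\mathcal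 C_k(\mathbf X;\mathcal D_n)\mid\mathcal D_n)-\alpha\big|\to0$ in probability as $n\to\infty$. A2: $\inf_{\mathbf w\in\mathcal W^*}\|\widehat{\mathbf w}_n-\mathbf w\|\to0$ in probability as $n\to\infty$. A3: $\mathcal C_{\mathrm{comb}}(\mathbf X;\mathcal D_n):=\{y\in\mathbb R:\sum_{k=1}^K\widehat w_{n,k}\mathbf 1\{y\in\mathcal C_k(\mathbf X;\mathcal D_n)\}>1/2\}$. *)

theory Defs
  imports "HOL-Probability.Probability"
begin

definition tendsto_in_prob :: "'a measure \<Rightarrow> (nat \<Rightarrow> 'a \<Rightarrow> real) \<Rightarrow> real \<Rightarrow> bool" where
  "tendsto_in_prob M Z c \<longleftrightarrow>
     (\<forall>e>0. (\<lambda>n. measure M {\<omega> \<in> space M. e < \<bar>Z n \<omega> - c\<bar>}) \<longlonglongrightarrow> 0)"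

definition prob_simplex :: "(real ^ 'k::finite) set" where
  "prob_simplex = {w. (\<forall>k. 0 \<le> w $ k) \<and> (\<Sum>k\<in>UNIV. w $ k) = 1}"

text \<open>Combined (majority-vote) prediction set, assumption A3.\<close>
definition comb_set :: "(real ^ 'k::finite) \<Rightarrow> ('k \<Rightarrow> real set) \<Rightarrow> real set" where
  "comb_set w C = {y. (\<Sum>k\<in>UNIV. w $ k * (if y \<in> C k then 1 else 0)) > 1/2}"

end

theory Submission
  imports Defs
begin

(*
  If every set C_k with k in Kstar covers Y and the estimated weights lie within
  eta = delta / (2 K) of Wstar, then the weights of Kstar still sum to more than
  1/2 + delta - K eta >= 1/2, so the majority vote covers Y.  Hence the combined set
  misses Y with probability at most P(some k in Kstar misses Y) + P(dist(w_n, Wstar) > eta);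
  the first term has limsup at most alpha by hypothesis and the second vanishes by A2.
*)

lemma sum_components_diff_le_dist:
  fixes v w :: "real ^ 'k::finite"
  shows "\<bar>(\<Sum>k\<in>K. v $ k) - (\<Sum>k\<in>K. w $ k)\<bar> \<le> real (card K) * dist v w"
proof -
  have "\<bar>(\<Sum>k\<in>K. v $ k) - (\<Sum>k\<in>K. w $ k)\<bar> = \<bar>\<Sum>k\<in>K. (v - w) $ k\<bar>"
    by (simp add: sum_subtractf)
  also have "\<dots> \<le> (\<Sum>k\<in>K. \<bar>(v - w) $ k\<bar>)"
    by (rule sum_abs)
  also have "\<dots> \<le> (\<Sum>k\<in>K. dist v w)"
    by (intro sum_mono) (metis component_le_norm_cart dist_norm)
  finally show ?thesis by simp
qed

lemma sum_components_ge_infdist: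
  fixes w :: "real ^ 'k::finite"
  assumes "closed W" "W \<noteq> {}" "\<And>v. v \<in> W \<Longrightarrow> c \<le> (\<Sum>k\<in>K. v $ k)"
  shows "c - real (card K) * infdist w W \<le> (\<Sum>k\<in>K. w $ k)"
proof -
  obtain v where "v \<in> W" "infdist w W = dist v w"
    using infdist_attains_inf[OF assms(1,2), of w] by (metis dist_commute)
  moreover note assms(3)[of v] sum_components_diff_le_dist[where K = K and v = v and w = w]
  ultimately show ?thesis by (simp add: abs_le_iff)
qed

lemma prob_simplex_INF_sum_components_le:
  assumes "W \<subseteq> prob_simplex" "w \<in> W"
  shows "(INF v\<in>W. \<Sum>k\<in>K. v $ k) \<le> (\<Sum>k\<in>K. w $ k)"
proof (rule cINF_lower[OF _ assms(2)])
  show "bdd_below ((\<lambda>v. \<Sum>k\<in>K. v $ k) ` W)"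
    using assms(1) by (intro bdd_belowI[of _ 0]) (auto simp: prob_simplex_def intro: sum_nonneg)
qed

lemma mem_comb_set_if_majority:
  assumes "\<And>k. 0 \<le> w $ k" "1/2 < (\<Sum>k\<in>K. w $ k)" "\<And>k. k \<in> K \<Longrightarrow> y \<in> S k"
  shows "y \<in> comb_set w S"
proof -
  have "(\<Sum>k\<in>K. w $ k) = (\<Sum>k\<in>K. w $ k * (if y \<in> S k then 1 else 0))"
    using assms(3) by (intro sum.cong) auto
  also have "\<dots> \<le> (\<Sum>k\<in>UNIV. w $ k * (if y \<in> S k then 1 else 0))"
    using assms(1) by (intro sum_mono2) auto
  finally show ?thesis
    using assms(2) by (simp add: comb_set_def)
qed

lemma mem_comb_set_near_majority:
  fixes w :: "real ^ 'k::finite"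
  assumes "closed W" "W \<noteq> {}" "W \<subseteq> prob_simplex" "\<delta> > 0"
    and "(INF v\<in>W. \<Sum>k\<in>K. v $ k) \<ge> 1/2 + \<delta>"
    and "w \<in> prob_simplex" "infdist w W \<le> \<delta> / (2 * real CARD('k))"
    and "\<And>k. k \<in> K \<Longrightarrow> y \<in> S k"
  shows "y \<in> comb_set w S"
proof (rule mem_comb_set_if_majority)
  show "0 \<le> w $ k" for k
    using assms(6) by (simp add: prob_simplex_def)
  have "1/2 + \<delta> - real (card K) * infdist w W \<le> (\<Sum>k\<in>K. w $ k)"
    using assms(5) prob_simplex_INF_sum_components_le[OF assms(3)]
    by (intro sum_components_ge_infdist[OF assms(1,2)]) (meson order_trans)
  moreover have "real (card K) * infdist w W \<le> real CARD('k) * (\<delta> / (2 * real CARD('k)))"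
    using assms(7) by (intro mult_mono) (auto simp: card_mono infdist_nonneg)
  ultimately show "1/2 < (\<Sum>k\<in>K. w $ k)"
    using assms(4) by simp
qed (use assms(8) in auto)

lemma subalgebra_vimage_algebra:
  assumes "f \<in> measurable M N"
  shows "subalgebra M (vimage_algebra (space M) f N)"
  unfolding subalgebra_def using sets_image_in_sets[OF refl assms] by simp

lemma sets_comb_set_event:
  fixes w :: "'a \<Rightarrow> real ^ 'k::finite"
  assumes "w \<in> borel_measurable M" "\<And>k. {x \<in> space M. y x \<in> S x k} \<in> sets M"
  shows "{x \<in> space M. y x \<in> comb_set (w x) (S x)} \<in> sets M"
proof -
  have "(\<lambda>x. w x $ k) \<in> borel_measurable M" for k
    by (rule borel_measurable_continuous_on[OF _ assms(1)]) (intro continuous_intros)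
  moreover have "(\<lambda>x. if y x \<in> S x k then 1 else 0 :: real) \<in> borel_measurable M" for k
    by (rule measurable_If) (auto simp: pred_def assms(2))
  ultimately have "(\<lambda>x. \<Sum>k\<in>UNIV. w x $ k * (if y x \<in> S x k then 1 else 0)) \<in> borel_measurable M"
    by (intro borel_measurable_sum borel_measurable_times) auto
  then show ?thesis
    unfolding comb_set_def by measurable
qed

lemma (in prob_space) prob_ge_of_compl_subset_Un:
  assumes "A \<in> events" "B \<in> events" "G \<in> events" "space M - G \<subseteq> A \<union> B"
  shows "1 - prob A - prob B \<le> prob G"
proof -
  have "1 - prob G = prob (space M - G)"
    using assms(3) by (simp add: prob_compl)
  also have "\<dots> \<le> prob (A \<union> B)"
    using assms by (intro finite_measure_mono) auto
  also have "\<dots> \<le> prob A + prob B"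
    using assms(1,2) by (rule measure_Un_le)
  finally show ?thesis by linarith
qed

lemma liminf_ge_of_le_limsup_tendsto_zero:
  fixes a b g :: "nat \<Rightarrow> real"
  assumes bound: "\<And>n. c - a n - b n \<le> g n"
    and a: "limsup (\<lambda>n. ereal (a n)) \<le> ereal \<alpha>" and b: "b \<longlonglongrightarrow> 0"
  shows "ereal (c - \<alpha>) \<le> liminf (\<lambda>n. ereal (g n))"
  unfolding le_Liminf_iff
proof (intro allI impI)
  fix y assume "y < ereal (c - \<alpha>)"
  then obtain r where r: "y < ereal r" "r < c - \<alpha>"
    using ereal_dense2 by fastforce
  define e where "e = c - \<alpha> - r"
  have "e > 0" using r by (simp add: e_def)
  have "ereal \<alpha> < ereal (\<alpha> + e/2)" using \<open>e > 0\<close> by simp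
  then have "\<forall>\<^sub>F n in sequentially. ereal (a n) < ereal (\<alpha> + e/2)"
    using a unfolding Limsup_le_iff by blast
  moreover have "\<forall>\<^sub>F n in sequentially. b n < e/2"
    using b \<open>e > 0\<close> by (intro order_tendstoD) auto
  ultimately show "\<forall>\<^sub>F n in sequentially. y < ereal (g n)"
  proof eventually_elim
    case (elim n)
    then have "a n < \<alpha> + e/2" by simp
    then have "r < g n" using elim(2) bound[of n] e_def by linarith
    with r(1) show ?case by (simp add: less_le_trans)
  qed
qed

theorem theorem3:
  fixes M :: "'a measure"
    and N :: "'d measure"
    and D :: "nat \<Rightarrow> 'a \<Rightarrow> 'd"
    and X :: "nat \<Rightarrow> 'a \<Rightarrow> 'x"
    and Y :: "nat \<Rightarrow> 'a \<Rightarrow> real"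
    and C :: "nat \<Rightarrow> 'k::finite \<Rightarrow> 'd \<Rightarrow> 'x \<Rightarrow> real set"
    and what :: "nat \<Rightarrow> 'a \<Rightarrow> real ^ 'k"
    and Wstar :: "(real ^ 'k) set"
    and Kstar :: "'k set"
    and \<alpha> \<delta> :: real
  assumes M: "prob_space M"
    and K2: "CARD('k) \<ge> 2"
    and alpha: "0 < \<alpha>" "\<alpha> < 1"
    and D_meas: "\<And>n. D n \<in> measurable M N"
    and C_meas: "\<And>n k. {\<omega> \<in> space M. Y n \<omega> \<in> C n k (D n \<omega>) (X n \<omega>)} \<in> sets M"
    and what_meas: "\<And>n. what n \<in> measurable (vimage_algebra (space M) (D n) N) borel"
    and what_simplex: "\<And>n \<omega>. \<omega> \<in> space M \<Longrightarrow> what n \<omega> \<in> prob_simplex"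
    and W_ne: "Wstar \<noteq> {}" and W_closed: "closed Wstar" and W_convex: "convex Wstar"
    and W_sub: "Wstar \<subseteq> prob_simplex"
    and A1': "tendsto_in_prob M
        (\<lambda>n \<omega>. (SUP k\<in>UNIV. \<bar>real_cond_exp M (vimage_algebra (space M) (D n) N)
             (indicator {\<omega>' \<in> space M. Y n \<omega>' \<notin> C n k (D n \<omega>') (X n \<omega>')}) \<omega> - \<alpha>\<bar>)) 0"
    and A2: "tendsto_in_prob M (\<lambda>n \<omega>. infdist (what n \<omega>) Wstar) 0"
    and delta: "\<delta> > 0"
    and Kstar_weight: "(INF w\<in>Wstar. (\<Sum>k\<in>Kstar. w $ k)) \<ge> 1/2 + \<delta>"
    and Kstar_cov: "limsup (\<lambda>n. ereal (measure M
        {\<omega> \<in> space M. \<exists>k\<in>Kstar. Y n \<omega> \<notin> C n k (D n \<omega>) (X n \<omega>)})) \<le> ereal \<alpha>"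
  shows "liminf (\<lambda>n. ereal (measure M
        {\<omega> \<in> space M. Y n \<omega> \<in> comb_set (what n \<omega>) (\<lambda>k. C n k (D n \<omega>) (X n \<omega>))}))
         \<ge> ereal (1 - \<alpha>)"
proof -
  interpret prob_space M by (rule M)
  define \<eta> where "\<eta> = \<delta> / (2 * real CARD('k))"
  define A where "A n = {\<omega> \<in> space M. \<exists>k\<in>Kstar. Y n \<omega> \<notin> C n k (D n \<omega>) (X n \<omega>)}" for n
  define B where "B n = {\<omega> \<in> space M. \<eta> < infdist (what n \<omega>) Wstar}" for n
  define G where "G n = {\<omega> \<in> space M. Y n \<omega> \<in> comb_set (what n \<omega>) (\<lambda>k. C n k (D n \<omega>) (X n \<omega>))}" for n
  have what_M: "what n \<in> borel_measurable M" for n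
    by (rule measurable_from_subalg[OF subalgebra_vimage_algebra[OF D_meas] what_meas])
  have events: "A n \<in> events" "B n \<in> events" "G n \<in> events" for n
  proof -
    have "A n = (\<Union>k\<in>Kstar. space M - {\<omega> \<in> space M. Y n \<omega> \<in> C n k (D n \<omega>) (X n \<omega>)})"
      unfolding A_def by auto
    also have "\<dots> \<in> events"
      using C_meas by (intro sets.finite_UN) auto
    finally show "A n \<in> events" .
    have "(\<lambda>\<omega>. infdist (what n \<omega>) Wstar) \<in> borel_measurable M"
      by (rule borel_measurable_continuous_on[OF _ what_M]) (intro continuous_intros)
    then show "B n \<in> events"
      unfolding B_def by measurable
    show "G n \<in> events"
      unfolding G_def by (rule sets_comb_set_event[OF what_M C_meas])
  qed
  have "space M - G n \<subseteq> A n \<union> B n" for n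
    unfolding A_def B_def G_def \<eta>_def using what_simplex
    by (auto simp: not_less
        intro!: mem_comb_set_near_majority[OF W_closed W_ne W_sub delta Kstar_weight])
  then have bound: "1 - prob (A n) - prob (B n) \<le> prob (G n)" for n
    using events by (intro prob_ge_of_compl_subset_Un)
  have B_lim: "(\<lambda>n. prob (B n)) \<longlonglongrightarrow> 0"
    using A2 delta unfolding tendsto_in_prob_def B_def \<eta>_def by (simp add: infdist_nonneg)
  show ?thesis
    using bound Kstar_cov B_lim unfolding A_def G_def by (rule liminf_ge_of_le_limsup_tendsto_zero)
qed

end
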